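(* With $B_n,P_n$ as in the context, let $L_n=|B_n|$, $c_n$ the number of $1$'s in $B_n$, $m_n=|P_n|$ and $o_n$ the number of $1$'s in $P_n$. Assume that the limit $d=\lim_{n\to\infty}c_n/L_n$ exists and $d\neq 1/2$. Then the limit $\delta=\lim_{n\to\infty}o_n/m_n$ exists and $\delta=d$.
   Context: Generation operator: for a finite vector $R=\langle r_1,\dots,r_m\rangle$ of positive integers and $s\in\{1,3\}$, $\mathcal{G}(R,s)= s^{r_1}\,(4-s)^{r_2}\,s^{r_3}\cdots$ (the $i$-th run consists of $r_i$ copies of $s$ if $i$ is odd and of $4-s$ if $i$ is even), of length $\sum_i r_i$. For a finite word $W$ over $\{1,3\}$, $R(W)$ denotes $W$ itself regarded as a vector of positive integers. Define $B_1=\mathcal{G}(\langle 1,3,3,3,1\rangle,1)=1\,3\,3\,3\,1\,1\,1\,3\,3\,3\,1$, $P_1=3$, and for $n\ge1$: $B_{n+1}=B_n\,P_n\,B_n$ (concatenation), $P_{n+1}=\mathcal{G}(R(P_n),3)$. *)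

theory Defs
  imports Complex_Main
begin

fun gen :: "nat list \<Rightarrow> nat \<Rightarrow> nat list" where
  "gen [] s = []"
| "gen (r # rs) s = replicate r s @ gen rs (4 - s)"

text \<open>P n for n >= 1 (value at index 0 is an irrelevant placeholder).\<close>
fun P :: "nat \<Rightarrow> nat list" where
  "P 0 = []"
| "P (Suc 0) = [3]"
| "P (Suc (Suc n)) = gen (P (Suc n)) 3"

text \<open>B n for n >= 1 (value at index 0 is an irrelevant placeholder).\<close>
fun B :: "nat \<Rightarrow> nat list" where
  "B 0 = []"
| "B (Suc 0) = gen [1,3,3,3,1] 1"
| "B (Suc (Suc n)) = B (Suc n) @ P (Suc n) @ B (Suc n)"

definition ones :: "nat list \<Rightarrow> nat" where
  "ones w = length (filter (\<lambda>x. x = 1) w)"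

lemma B1: "B 1 = [1,3,3,3,1,1,1,3,3,3,1]" by (simp add: numeral_eq_Suc)

end

theory Submission
  imports Defs
begin

(* Every P n (n \<ge> 1) has odd length: its letters are odd and |P (n + 1)| is their sum.
   Hence G(-, 3) maps the factorisation P (n + 3) = P (n + 2) 1 P n 1 P (n + 2) to the same
   factorisation one level up, and comparing with B (n + 1) = B n P n B n gives
   B n = 1 P (n + 2) 1. So the densities of 1's in B n and in P (n + 2) differ by at most
   2 / |P (n + 2)| and have the same limit. *)

lemma length_gen: "length (gen R s) = sum_list R"
  by (induction R arbitrary: s) auto

lemma set_gen: "s \<le> 4 \<Longrightarrow> set (gen R s) \<subseteq> {s, 4 - s}"
proof (induction R arbitrary: s)
  case (Cons r R)
  have "set (gen R (4 - s)) \<subseteq> {4 - s, 4 - (4 - s)}"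
    using Cons.IH by simp
  then show ?case
    using Cons.prems by auto
qed simp

lemma gen_append:
  "s \<le> 4 \<Longrightarrow> gen (u @ v) s = gen u s @ gen v (if even (length u) then s else 4 - s)"
  by (induction u arbitrary: s) auto

lemma odd_sum_list_iff_odd_length:
  fixes xs :: "nat list"
  assumes "\<forall>x \<in> set xs. odd x"
  shows "odd (sum_list xs) \<longleftrightarrow> odd (length xs)"
  using assms by (induction xs) auto

lemma P_Suc: "n \<ge> 1 \<Longrightarrow> P (Suc n) = gen (P n) 3"
  by (cases n) auto

lemma B_Suc: "n \<ge> 1 \<Longrightarrow> B (Suc n) = B n @ P n @ B n"
  by (cases n) auto

declare P.simps(3) [simp del] B.simps(3) [simp del]

lemma set_P: "set (P n) \<subseteq> {1, 3}"
  using set_gen[of 3] by (induction n rule: P.induct) (auto simp: P.simps)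

lemma odd_length_P: "n \<ge> 1 \<Longrightarrow> odd (length (P n))"
proof (induction n rule: nat_induct_at_least)
  case base
  then show ?case by simp
next
  case (Suc n)
  have "\<forall>x \<in> set (P n). odd x" using set_P[of n] by auto
  then show ?case
    using Suc by (simp add: P_Suc length_gen odd_sum_list_iff_odd_length)
qed

lemma P_block_recursion: "P (n + 4) = P (n + 3) @ [1] @ P (n + 1) @ [1] @ P (n + 3)"
proof (induction n)
  case 0
  show ?case by (simp add: numeral_eq_Suc P.simps)
next
  case (Suc n)
  have "P (Suc n + 4) = gen (P (n + 4)) 3"
    using P_Suc[of "n + 4"] by simp
  also have "\<dots> = gen (P (n + 3) @ [1] @ P (n + 1) @ [1] @ P (n + 3)) 3"
    unfolding Suc.IH ..
  also have "\<dots> = gen (P (n + 3)) 3 @ [1] @ gen (P (n + 1)) 3 @ [1] @ gen (P (n + 3)) 3"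
    using odd_length_P[of "n + 1"] odd_length_P[of "n + 3"] by (simp add: gen_append)
  also have "\<dots> = P (Suc n + 3) @ [1] @ P (Suc n + 1) @ [1] @ P (Suc n + 3)"
    using P_Suc[of "n + 1"] P_Suc[of "n + 3"] by simp
  finally show ?case .
qed

lemma B_eq_P: "B (n + 1) = 1 # P (n + 3) @ [1]"
proof (induction n)
  case 0
  show ?case by (simp add: numeral_eq_Suc P.simps)
next
  case (Suc n)
  have "B (Suc n + 1) = B (n + 1) @ P (n + 1) @ B (n + 1)"
    using B_Suc[of "n + 1"] by simp
  also have "\<dots> = 1 # (P (n + 3) @ [1] @ P (n + 1) @ [1] @ P (n + 3)) @ [1]"
    unfolding Suc.IH by simp
  also have "\<dots> = 1 # P (Suc n + 3) @ [1]"
    using P_block_recursion[of n] by (simp add: add.commute)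
  finally show ?case .
qed

lemma strict_mono_length_P: "strict_mono (\<lambda>n. length (P (n + 3)))"
  unfolding strict_mono_Suc_iff
proof
  fix n
  show "length (P (n + 3)) < length (P (Suc n + 3))"
    using P_block_recursion[of n] by (simp add: add.commute)
qed

lemma abs_ratio_shift_le:
  fixes c m k :: real
  assumes "0 \<le> c" "c \<le> m" "0 < m" "0 \<le> k"
  shows "\<bar>c / m - (c + k) / (m + k)\<bar> \<le> k / m"
proof -
  have "c / m - (c + k) / (m + k) = k * (c - m) / (m * (m + k))"
    using assms by (simp add: field_simps)
  also have "\<bar>\<dots>\<bar> = k * (m - c) / (m * (m + k))"
    using assms by (simp add: abs_divide abs_mult)
  also have "\<dots> \<le> k * m / (m * (m + k))"
    using assms by (intro divide_right_mono mult_left_mono) auto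
  also have "\<dots> = k / (m + k)"
    using assms by simp
  also have "\<dots> \<le> k / m"
    using assms by (intro divide_left_mono) auto
  finally show ?thesis .
qed

lemma tendsto_ratio_unshift:
  fixes c m :: "nat \<Rightarrow> real" and k :: real
  assumes lim: "(\<lambda>n. (c n + k) / (m n + k)) \<longlonglongrightarrow> d"
    and m: "filterlim m at_top sequentially"
    and c: "\<And>n. 0 \<le> c n" "\<And>n. c n \<le> m n"
    and k: "0 \<le> k"
  shows "(\<lambda>n. c n / m n) \<longlonglongrightarrow> d"
proof (rule Lim_transform[OF lim])
  have "(\<lambda>n. k / m n) \<longlonglongrightarrow> 0"
    by (rule tendsto_divide_0[OF tendsto_const filterlim_at_top_imp_at_infinity[OF m]])
  moreover have "\<forall>\<^sub>F n in sequentially. 1 \<le> m n"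
    using m by (simp add: filterlim_at_top)
  then have "\<forall>\<^sub>F n in sequentially.
      norm (c n / m n - (c n + k) / (m n + k)) \<le> norm (k / m n) * 1"
    by eventually_elim (use c k abs_ratio_shift_le in auto)
  ultimately show "(\<lambda>n. c n / m n - (c n + k) / (m n + k)) \<longlonglongrightarrow> 0"
    by (rule tendsto_0_le)
qed

theorem theorem5p3:
  fixes d :: real
  assumes "(\<lambda>n. real (ones (B n)) / real (length (B n))) \<longlonglongrightarrow> d"
    and "d \<noteq> 1/2"
  shows "(\<lambda>n. real (ones (P n)) / real (length (P n))) \<longlonglongrightarrow> d"
proof -
  have "(\<lambda>n. real (ones (B (n + 1))) / real (length (B (n + 1)))) \<longlonglongrightarrow> d"
    using assms(1) by (rule LIMSEQ_ignore_initial_segment)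
  then have "(\<lambda>n. (real (ones (P (n + 3))) + 2) / (real (length (P (n + 3))) + 2)) \<longlonglongrightarrow> d"
    unfolding B_eq_P ones_def by (simp add: add.commute)
  moreover have "filterlim (\<lambda>n. real (length (P (n + 3)))) at_top sequentially"
    using filterlim_compose[OF filterlim_real_sequentially
        filterlim_subseq[OF strict_mono_length_P]] by simp
  ultimately have "(\<lambda>n. real (ones (P (n + 3))) / real (length (P (n + 3)))) \<longlonglongrightarrow> d"
    by (rule tendsto_ratio_unshift) (auto simp: ones_def)
  then show ?thesis
    by (rule LIMSEQ_offset)
qed

end
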